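(* Let $F:\mathbb{R}^n\times\mathbb{R}^m\to\mathbb{R}^n$ be differentiable with $L_{\nabla F}$-Lipschitz gradient (with respect to the joint variable $(\mathbf{x},\mathbf{u})$), and suppose $\|F(\mathbf{x},\mathbf{u})-F(\mathbf{x}',\mathbf{u})\|\le L_F\|\mathbf{x}-\mathbf{x}'\|$ for all $\mathbf{x},\mathbf{x}',\mathbf{u}$, with $L_F\neq 1$. Fix $H\in\mathbb{N}$, an initial state $\mathbf{x}_0$, an action set $U\subseteq\mathbb{R}^m$, and a nominal sequence $(\bar{\mathbf{x}}_k,\bar{\mathbf{u}}_{k+1})_{k=0}^{H-1}$. Let $L_k$ be the linearization of $F$ about $(\bar{\mathbf{x}}_k,\bar{\mathbf{u}}_{k+1})$: $$L_k(\mathbf{x},\mathbf{u})=F(\bar{\mathbf{x}}_k,\bar{\mathbf{u}}_{k+1})+\nabla_{\mathbf{x}}F(\bar{\mathbf{x}}_k,\bar{\mathbf{u}}_{k+1})(\mathbf{x}-\bar{\mathbf{x}}_k)+\nabla_{\mathbf{u}}F(\bar{\mathbf{x}}_k,\bar{\mathbf{u}}_{k+1})(\mathbf{u}-\bar{\mathbf{u}}_{k+1}).$$ For an input sequence $\mathbf{u}_{[H]}=(\mathbf{u}_1,\dots,\mathbf{u}_H)\in U^H$, define the nonlinear rollout $\xi_0=\mathbf{x}_0$, $\xi_{k+1}=F(\xi_k,\mathbf{u}_{k+1})$ and the linearized rollout $\eta_0=\mathbf{x}_0$, $\eta_{k+1}=L_k(\eta_k,\mathbf{u}_{k+1})$,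 and set $F^H(\mathbf{x}_0,\mathbf{u}_{[H]})=\xi_H$, $L^H(\mathbf{x}_0,\mathbf{u}_{[H]})=\eta_H$. Let $$\varepsilon_H=\sup_{\mathbf{u}_{[H]}\in U^H}\ \max_{0\le k\le H-1}\big\|(\eta_k,\mathbf{u}_{k+1})-(\bar{\mathbf{x}}_k,\bar{\mathbf{u}}_{k+1})\big\|$$ and assume $\varepsilon_H<\infty$. Then $$d_S\big(\{F^H(\mathbf{x}_0,\mathbf{u}_{[H]}):\mathbf{u}_{[H]}\in U^H\},\ \{L^H(\mathbf{x}_0,\mathbf{u}_{[H]}):\mathbf{u}_{[H]}\in U^H\}\big)\le\frac{L_F^H-1}{L_F-1}\cdot\frac12 L_{\nabla F}\,\varepsilon_H^2 .$$
   Context: For $a\in\mathbb{R}^n$ and $M\subseteq\mathbb{R}^n$, $d(a,M)=\inf_{m\in M}\|a-m\|$; the Hausdorff distance between $M,N\subseteq\mathbb{R}^n$ is $d_S(M,N)=\max\{\sup_{m\in M}d(m,N),\ \sup_{n\in N}d(n,M)\}$. Norms are Euclidean. *)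

theory Defs
  imports "HOL-Analysis.Analysis"
begin

definition hausdorff_dist :: "'a::metric_space set \<Rightarrow> 'a set \<Rightarrow> ereal" where
  "hausdorff_dist M N =
     max (SUP m\<in>M. ereal (infdist m N)) (SUP n\<in>N. ereal (infdist n M))"

primrec nl_rollout ::
  "('a \<Rightarrow> 'b \<Rightarrow> 'a) \<Rightarrow> 'a \<Rightarrow> (nat \<Rightarrow> 'b) \<Rightarrow> nat \<Rightarrow> 'a" where
  "nl_rollout F x0 u 0 = x0"
| "nl_rollout F x0 u (Suc k) = F (nl_rollout F x0 u k) (u (Suc k))"

text \<open>Linearization L_k of F about (xb k, ub (k+1)); F' p is the (joint) derivative
  of F at p, so F' p (v,0) is the x-partial and F' p (0,w) the u-partial.\<close>
definition linearization ::
  "('a::real_normed_vector \<Rightarrow> 'b::real_normed_vector \<Rightarrow> 'a) \<Rightarrow> ('a \<times> 'b \<Rightarrow> 'a \<times> 'b \<Rightarrow> 'a)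
   \<Rightarrow> (nat \<Rightarrow> 'a) \<Rightarrow> (nat \<Rightarrow> 'b) \<Rightarrow> nat \<Rightarrow> 'a \<Rightarrow> 'b \<Rightarrow> 'a" where
  "linearization F F' xb ub k x u =
     F (xb k) (ub (Suc k))
     + F' (xb k, ub (Suc k)) (x - xb k, 0)
     + F' (xb k, ub (Suc k)) (0, u - ub (Suc k))"

primrec lin_rollout ::
  "('a::real_normed_vector \<Rightarrow> 'b::real_normed_vector \<Rightarrow> 'a) \<Rightarrow> ('a \<times> 'b \<Rightarrow> 'a \<times> 'b \<Rightarrow> 'a)
   \<Rightarrow> (nat \<Rightarrow> 'a) \<Rightarrow> (nat \<Rightarrow> 'b) \<Rightarrow> 'a \<Rightarrow> (nat \<Rightarrow> 'b) \<Rightarrow> nat \<Rightarrow> 'a" where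
  "lin_rollout F F' xb ub x0 u 0 = x0"
| "lin_rollout F F' xb ub x0 u (Suc k) =
     linearization F F' xb ub k (lin_rollout F F' xb ub x0 u k) (u (Suc k))"

definition input_seqs :: "'b set \<Rightarrow> nat \<Rightarrow> (nat \<Rightarrow> 'b) set" where
  "input_seqs U H = {u. \<forall>k\<in>{1..H}. u k \<in> U}"

definition lin_dev ::
  "('a::real_normed_vector \<Rightarrow> 'b::real_normed_vector \<Rightarrow> 'a) \<Rightarrow> ('a \<times> 'b \<Rightarrow> 'a \<times> 'b \<Rightarrow> 'a)
   \<Rightarrow> (nat \<Rightarrow> 'a) \<Rightarrow> (nat \<Rightarrow> 'b) \<Rightarrow> 'a \<Rightarrow> nat \<Rightarrow> (nat \<Rightarrow> 'b) \<Rightarrow> real" where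
  "lin_dev F F' xb ub x0 H u =
     Max ((\<lambda>k. norm ((lin_rollout F F' xb ub x0 u k, u (Suc k)) - (xb k, ub (Suc k)))) ` {..<H})"

definition eps_H ::
  "('a::real_normed_vector \<Rightarrow> 'b::real_normed_vector \<Rightarrow> 'a) \<Rightarrow> ('a \<times> 'b \<Rightarrow> 'a \<times> 'b \<Rightarrow> 'a)
   \<Rightarrow> (nat \<Rightarrow> 'a) \<Rightarrow> (nat \<Rightarrow> 'b) \<Rightarrow> 'a \<Rightarrow> 'b set \<Rightarrow> nat \<Rightarrow> real" where
  "eps_H F F' xb ub x0 U H = Sup (lin_dev F F' xb ub x0 H ` input_seqs U H)"

end

theory Submission
  imports Defs
begin

text \<open>Along the nominal trajectory the linearization differs from F by a Taylor remainder,
  which the Lipschitz derivative bounds by LdF/2 times the squared deviation, itself at most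
  eps_H squared. Hence the rollout errors e_k satisfy e_(k+1) <= LF e_k + LdF eps_H^2 / 2 with
  e_0 = 0, and the geometric series bounds e_H. Both reachable sets are images of the same
  input sequences, so this uniform bound on e_H bounds their Hausdorff distance.\<close>

lemma taylor_remainder_bound:
  fixes f :: "'a::real_normed_vector \<Rightarrow> 'b::real_normed_vector"
  assumes deriv: "\<And>p. (f has_derivative f' p) (at p)"
    and deriv_lip: "\<And>p q. onorm (\<lambda>v. f' p v - f' q v) \<le> L * dist p q"
  shows "norm (f y - f x - f' x (y - x)) \<le> L / 2 * (norm (y - x))\<^sup>2"
proof -
  define h where "h = y - x"
  define G where "G t = f (x + t *\<^sub>R h) - t *\<^sub>R f' x h" for t :: real
  define P where "P t = L * (norm h)\<^sup>2 / 2 * t\<^sup>2" for t :: real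
  have linear: "bounded_linear (f' p)" for p
    using deriv by blast
  have G_deriv: "(G has_vector_derivative (f' (x + t *\<^sub>R h) h - f' x h)) (at t)" for t
  proof -
    have "((\<lambda>t. x + t *\<^sub>R h) has_derivative (\<lambda>s. s *\<^sub>R h)) (at t)"
      by (auto intro!: derivative_eq_intros)
    then have "((\<lambda>t. f (x + t *\<^sub>R h)) has_derivative (\<lambda>s. f' (x + t *\<^sub>R h) (s *\<^sub>R h))) (at t)"
      by (rule has_derivative_compose[OF _ deriv])
    then have "(G has_derivative (\<lambda>s. f' (x + t *\<^sub>R h) (s *\<^sub>R h) - s *\<^sub>R f' x h)) (at t)"
      unfolding G_def by (rule has_derivative_diff) (auto intro!: derivative_eq_intros)
    moreover have "(\<lambda>s. f' (x + t *\<^sub>R h) (s *\<^sub>R h) - s *\<^sub>R f' x h)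
        = (\<lambda>s. s *\<^sub>R (f' (x + t *\<^sub>R h) h - f' x h))"
      using linear_scale[OF bounded_linear.linear[OF linear]] by (auto simp: algebra_simps)
    ultimately show ?thesis
      unfolding has_vector_derivative_def by simp
  qed
  have P_deriv: "(P has_vector_derivative (L * (norm h)\<^sup>2 * t)) (at t)" for t
    unfolding P_def has_real_derivative_iff_has_vector_derivative[symmetric]
    by (auto intro!: derivative_eq_intros)
  have G'_le_P': "norm (f' (x + t *\<^sub>R h) h - f' x h) \<le> L * (norm h)\<^sup>2 * t" if "0 < t" for t
  proof -
    have "bounded_linear (\<lambda>v. f' (x + t *\<^sub>R h) v - f' x v)"
      using linear bounded_linear_sub by blast
    then have "norm (f' (x + t *\<^sub>R h) h - f' x h)
        \<le> onorm (\<lambda>v. f' (x + t *\<^sub>R h) v - f' x v) * norm h"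
      by (rule onorm)
    also have "\<dots> \<le> L * dist (x + t *\<^sub>R h) x * norm h"
      by (rule mult_right_mono[OF deriv_lip]) simp
    also have "\<dots> = L * (norm h)\<^sup>2 * t"
      using that by (simp add: dist_norm power2_eq_square)
    finally show ?thesis .
  qed
  have "continuous_on {0..1} G"
    using G_deriv by (meson continuous_at_imp_continuous_on has_vector_derivative_continuous)
  moreover have "continuous_on {0..1} P"
    unfolding P_def by (intro continuous_intros)
  ultimately have "norm (G 1 - G 0) \<le> P 1 - P 0"
    by (intro differentiable_bound_general[OF zero_less_one _ _ G_deriv P_deriv G'_le_P']) auto
  moreover have "G 1 - G 0 = f y - f x - f' x (y - x)"
    by (simp add: G_def h_def)
  ultimately show ?thesis
    by (simp add: P_def h_def)
qed

lemma bound_const_nonneg: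
  fixes d :: "'a::euclidean_space \<Rightarrow> 'a \<Rightarrow> real"
  assumes "\<And>x y. 0 \<le> d x y" and "\<And>x y. d x y \<le> L * dist x y"
  shows "0 \<le> L"
proof -
  obtain b :: 'a where "b \<in> Basis"
    using nonempty_Basis by blast
  then have "dist b 0 = 1"
    by simp
  then show ?thesis
    using assms(1)[of b 0] assms(2)[of b 0] by simp
qed

lemma linearization_error:
  fixes F :: "'a::real_normed_vector \<Rightarrow> 'b::real_normed_vector \<Rightarrow> 'a"
  assumes deriv: "\<And>p. ((\<lambda>q. F (fst q) (snd q)) has_derivative F' p) (at p)"
    and grad_lip: "\<And>p q. onorm (\<lambda>v. F' p v - F' q v) \<le> LdF * dist p q"
  shows "norm (F x u - linearization F F' xb ub k x u)
           \<le> LdF / 2 * (norm ((x, u) - (xb k, ub (Suc k))))\<^sup>2"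
proof -
  let ?p = "(x, u)" and ?pb = "(xb k, ub (Suc k))"
  have "F' ?pb (x - xb k, 0) + F' ?pb (0, u - ub (Suc k)) = F' ?pb (?p - ?pb)"
    using linear_add[OF bounded_linear.linear, of "F' ?pb" "(x - xb k, 0)" "(0, u - ub (Suc k))"]
      deriv by (auto simp: has_derivative_def)
  then have "F x u - linearization F F' xb ub k x u
      = F (fst ?p) (snd ?p) - F (fst ?pb) (snd ?pb) - F' ?pb (?p - ?pb)"
    by (simp add: linearization_def algebra_simps)
  also have "norm \<dots> \<le> LdF / 2 * (norm (?p - ?pb))\<^sup>2"
    using taylor_remainder_bound[OF deriv grad_lip] .
  finally show ?thesis .
qed

lemma affine_recurrence_bound:
  fixes e :: "nat \<Rightarrow> real"
  assumes "e 0 = 0" and "0 \<le> L"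
    and step: "\<And>k. k < H \<Longrightarrow> e (Suc k) \<le> L * e k + c"
  shows "e H \<le> c * (\<Sum>i<H. L ^ i)"
proof -
  have "k \<le> H \<Longrightarrow> e k \<le> c * (\<Sum>i<k. L ^ i)" for k
  proof (induction k)
    case 0
    then show ?case using assms(1) by simp
  next
    case (Suc k)
    then have "e (Suc k) \<le> L * e k + c"
      using step by simp
    also have "\<dots> \<le> L * (c * (\<Sum>i<k. L ^ i)) + c"
      using Suc assms(2) by (simp add: mult_left_mono)
    also have "\<dots> = c * (\<Sum>i<Suc k. L ^ i)"
      by (simp only: sum.lessThan_Suc_shift) (simp add: sum_distrib_left algebra_simps)
    finally show ?case .
  qed
  then show ?thesis by simp
qed

lemma hausdorff_dist_image_le:
  fixes f g :: "'c \<Rightarrow> 'a::metric_space"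
  assumes "\<And>a. a \<in> A \<Longrightarrow> dist (f a) (g a) \<le> B"
  shows "hausdorff_dist (f ` A) (g ` A) \<le> ereal B"
proof -
  have one_side: "(SUP m\<in>f ` A. ereal (infdist m (g ` A))) \<le> ereal B"
    if "\<And>a. a \<in> A \<Longrightarrow> dist (f a) (g a) \<le> B" for f g :: "'c \<Rightarrow> 'a"
  proof (rule SUP_least, clarify)
    fix a assume "a \<in> A"
    then have "infdist (f a) (g ` A) \<le> dist (f a) (g a)"
      by (intro infdist_le) auto
    with that \<open>a \<in> A\<close> show "ereal (infdist (f a) (g ` A)) \<le> ereal B"
      by force
  qed
  show ?thesis
    unfolding hausdorff_dist_def
    using one_side[of f g] one_side[of g f] assms by (simp add: dist_commute)
qed

lemma lin_dev_le_eps_H: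
  assumes "bdd_above (lin_dev F F' xb ub x0 H ` input_seqs U H)"
    and "u \<in> input_seqs U H" and "k < H"
  shows "norm ((lin_rollout F F' xb ub x0 u k, u (Suc k)) - (xb k, ub (Suc k)))
           \<le> eps_H F F' xb ub x0 U H"
proof -
  have "norm ((lin_rollout F F' xb ub x0 u k, u (Suc k)) - (xb k, ub (Suc k)))
      \<le> lin_dev F F' xb ub x0 H u"
    unfolding lin_dev_def by (rule Max_ge) (use assms(3) in auto)
  also have "\<dots> \<le> eps_H F F' xb ub x0 U H"
    unfolding eps_H_def by (rule cSup_upper) (use assms in auto)
  finally show ?thesis .
qed

lemma rollout_error_bound:
  fixes F :: "'a::real_normed_vector \<Rightarrow> 'b::real_normed_vector \<Rightarrow> 'a"
  assumes deriv: "\<And>p. ((\<lambda>q. F (fst q) (snd q)) has_derivative F' p) (at p)"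
    and grad_lip: "\<And>p q. onorm (\<lambda>v. F' p v - F' q v) \<le> LdF * dist p q"
    and F_lip: "\<And>x x' u. norm (F x u - F x' u) \<le> LF * norm (x - x')"
    and "0 \<le> LdF" and "0 \<le> LF"
    and dev: "\<And>k. k < H \<Longrightarrow>
      norm ((lin_rollout F F' xb ub x0 u k, u (Suc k)) - (xb k, ub (Suc k))) \<le> \<epsilon>"
  shows "norm (nl_rollout F x0 u H - lin_rollout F F' xb ub x0 u H)
           \<le> LdF / 2 * \<epsilon>\<^sup>2 * (\<Sum>i<H. LF ^ i)"
proof -
  define e where "e k = norm (nl_rollout F x0 u k - lin_rollout F F' xb ub x0 u k)" for k
  have "e (Suc k) \<le> LF * e k + LdF / 2 * \<epsilon>\<^sup>2" if "k < H" for k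
  proof -
    let ?\<xi> = "nl_rollout F x0 u k" and ?\<eta> = "lin_rollout F F' xb ub x0 u k"
    have "(norm ((?\<eta>, u (Suc k)) - (xb k, ub (Suc k))))\<^sup>2 \<le> \<epsilon>\<^sup>2"
      using dev[OF that] by (intro power_mono) auto
    then have remainder: "norm (F ?\<eta> (u (Suc k)) - linearization F F' xb ub k ?\<eta> (u (Suc k)))
        \<le> LdF / 2 * \<epsilon>\<^sup>2"
      using linearization_error[OF deriv grad_lip, of ?\<eta> "u (Suc k)" xb ub k] \<open>0 \<le> LdF\<close>
      by (smt (verit) divide_nonneg_nonneg mult_left_mono)
    show ?thesis
      unfolding e_def nl_rollout.simps lin_rollout.simps
      by (rule norm_diff_triangle_le[OF F_lip[THEN order_trans] remainder]) (simp add: e_def)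
  qed
  then have "e H \<le> LdF / 2 * \<epsilon>\<^sup>2 * (\<Sum>i<H. LF ^ i)"
    by (intro affine_recurrence_bound) (auto simp: e_def \<open>0 \<le> LF\<close>)
  then show ?thesis
    by (simp add: e_def)
qed

theorem lemma2:
  fixes F :: "real^'n \<Rightarrow> real^'m \<Rightarrow> real^'n"
    and F' :: "(real^'n) \<times> (real^'m) \<Rightarrow> (real^'n) \<times> (real^'m) \<Rightarrow> real^'n"
    and LdF LF :: real and H :: nat and x0 :: "real^'n" and U :: "(real^'m) set"
    and xb :: "nat \<Rightarrow> real^'n" and ub :: "nat \<Rightarrow> real^'m"
  assumes deriv: "\<And>p. ((\<lambda>q. F (fst q) (snd q)) has_derivative F' p) (at p)"
    and grad_lip: "\<And>p q. onorm (\<lambda>v. F' p v - F' q v) \<le> LdF * dist p q"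
    and F_lip: "\<And>x x' u. norm (F x u - F x' u) \<le> LF * norm (x - x')"
    and LF_ne1: "LF \<noteq> 1"
    and eps_fin: "bdd_above (lin_dev F F' xb ub x0 H ` input_seqs U H)"
  shows "hausdorff_dist
           ((\<lambda>u. nl_rollout F x0 u H) ` input_seqs U H)
           ((\<lambda>u. lin_rollout F F' xb ub x0 u H) ` input_seqs U H)
         \<le> ereal ((LF ^ H - 1) / (LF - 1) * (1 / 2 * LdF * (eps_H F F' xb ub x0 U H)\<^sup>2))"
proof (rule hausdorff_dist_image_le)
  have LdF_nonneg: "0 \<le> LdF"
  proof (rule bound_const_nonneg)
    show "0 \<le> onorm (\<lambda>v. F' p v - F' q v)" for p q
      using deriv by (intro onorm_pos_le bounded_linear_sub) (auto simp: has_derivative_def)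
  qed (rule grad_lip)
  have LF_nonneg: "0 \<le> LF"
    by (rule bound_const_nonneg[of "\<lambda>x x'. norm (F x 0 - F x' 0)"])
      (use F_lip in \<open>auto simp: dist_norm\<close>)
  have "(\<Sum>i<H. LF ^ i) = (LF ^ H - 1) / (LF - 1)"
    using LF_ne1 by (simp add: sum_gp_strict) (simp add: field_simps)
  then show "dist (nl_rollout F x0 u H) (lin_rollout F F' xb ub x0 u H)
      \<le> (LF ^ H - 1) / (LF - 1) * (1 / 2 * LdF * (eps_H F F' xb ub x0 U H)\<^sup>2)"
    if "u \<in> input_seqs U H" for u
    using rollout_error_bound[where H = H, OF deriv grad_lip F_lip LdF_nonneg LF_nonneg
        lin_dev_le_eps_H[OF eps_fin that]]
    by (simp add: dist_norm mult_ac)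
qed

end
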